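(* The reduction relation $\to_{{\tt j}/{\tt obox}}$ on $\lambda j$-terms is terminating.
   Context: $\lambda j$-terms are generated by $t,u::= x\mid \lambda x.t\mid t\,u\mid t[x/u]$; $\lambda x.t$ and $t[x/u]$ bind $x$ in $t$ (not in $u$), and terms are considered modulo $\alpha$-conversion. $\mathrm{fv}(t)$ is the set of free variables, $t\{x/u\}$ is capture-avoiding meta-level substitution, and $|t|_x$ is the number of free occurrences of $x$ in $t$. If $|t|_x=n\ge2$, $t_{[y]_x}$ denotes any term obtained from $t$ by replacing $k$ of the free occurrences of $x$ by a fresh variable $y$, for some $1\le k\le n-1$. $\to_{\tt j}$ is the closure under all contexts of: $({\tt w})$ $t[x/u]\to t$ if $|t|_x=0$; $({\tt d})$ $t[x/u]\to t\{x/u\}$ if $|t|_x=1$; $({\tt c})$ $t[x/u]\to t_{[y]_x}[x/u][y/u]$ if $|t|_x\ge2$, $y$ fresh. The substitution equivalence $\equiv_{\tt obox}$ is the smallest equivalence closed under contexts containing: $t[x/s][y/v]\sim t[y/v][x/s]$ if $x\notin\mathrm{fv}(v)$ and $y\notin\mathrm{fv}(s)$; $\lambda y.(t[x/s])\sim(\lambda y.t)[x/s]$ if $y\notin\mathrm{fv}(s)$; $t[x/s]\,v\sim(t\,v)[x/s]$ if $x\notin\mathrm{fv}(v)$; $(t\,v)[x/u]\sim t\,(v[x/u])$ if $x\notin\mathrm{fv}(t)$ and $x\in\mathrm{fv}(v)$; $t[y/v][x/u]\sim t[y/v[x/u]]$ if $x\notin\mathrm{fv}(t)$ and $x\in\mathrm{fv}(v)$.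 $t\to_{{\tt j}/{\tt obox}}u$ iff $t\equiv_{\tt obox}t'\to_{\tt j}u'\equiv_{\tt obox}u$ for some $t',u'$. *)

theory Defs
  imports Main
begin

text \<open>lambda-j terms modulo alpha-conversion, represented with de Bruijn indices.
  Lam t binds index 0 in t; Sub t u stands for t[x/u] and binds index 0 (= x) in t, not in u.\<close>

datatype trm = Var nat | Lam trm | App trm trm | Sub trm trm

fun lift :: "nat \<Rightarrow> trm \<Rightarrow> trm" where
  "lift k (Var i) = (if i < k then Var i else Var (Suc i))"
| "lift k (Lam t) = Lam (lift (Suc k) t)"
| "lift k (App t u) = App (lift k t) (lift k u)"
| "lift k (Sub t u) = Sub (lift (Suc k) t) (lift k u)"

fun subst :: "trm \<Rightarrow> nat \<Rightarrow> trm \<Rightarrow> trm" where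
  "subst (Var i) k u = (if i < k then Var i else if i = k then u else Var (i - 1))"
| "subst (Lam t) k u = Lam (subst t (Suc k) (lift 0 u))"
| "subst (App t v) k u = App (subst t k u) (subst v k u)"
| "subst (Sub t v) k u = Sub (subst t (Suc k) (lift 0 u)) (subst v k u)"

fun occ :: "nat \<Rightarrow> trm \<Rightarrow> nat" where
  "occ k (Var i) = (if i = k then 1 else 0)"
| "occ k (Lam t) = occ (Suc k) t"
| "occ k (App t u) = occ k t + occ k u"
| "occ k (Sub t u) = occ (Suc k) t + occ k u"

fun swap :: "nat \<Rightarrow> trm \<Rightarrow> trm" where
  "swap k (Var i) = (if i = k then Var (Suc k) else if i = Suc k then Var k else Var i)"
| "swap k (Lam t) = Lam (swap (Suc k) t)"
| "swap k (App t u) = App (swap k t) (swap k u)"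
| "swap k (Sub t u) = Sub (swap (Suc k) t) (swap k u)"

text \<open>split d t s: s is obtained from t (viewed at binder depth d, where the variable x
  is index d) by inserting a fresh variable y as index d+1 and replacing some (possibly
  none/all) free occurrences of x by y.\<close>
inductive split :: "nat \<Rightarrow> trm \<Rightarrow> trm \<Rightarrow> bool" where
  split_x:    "split d (Var d) (Var d)"
| split_y:    "split d (Var d) (Var (Suc d))"
| split_lt:   "i < d \<Longrightarrow> split d (Var i) (Var i)"
| split_gt:   "d < i \<Longrightarrow> split d (Var i) (Var (Suc i))"
| split_lam:  "split (Suc d) t s \<Longrightarrow> split d (Lam t) (Lam s)"
| split_app:  "split d t s \<Longrightarrow> split d u v \<Longrightarrow> split d (App t u) (App s v)"
| split_sub:  "split (Suc d) t s \<Longrightarrow> split d u v \<Longrightarrow> split d (Sub t u) (Sub s v)"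

inductive jstep :: "trm \<Rightarrow> trm \<Rightarrow> bool" where
  j_w: "occ 0 t = 0 \<Longrightarrow> jstep (Sub t u) (subst t 0 u)"
| j_d: "occ 0 t = 1 \<Longrightarrow> jstep (Sub t u) (subst t 0 u)"
| j_c: "occ 0 t \<ge> 2 \<Longrightarrow> split 0 t s \<Longrightarrow> occ 0 s \<ge> 1 \<Longrightarrow> occ 1 s \<ge> 1 \<Longrightarrow>
        jstep (Sub t u) (Sub (Sub s (lift 0 u)) u)"
| j_lam:  "jstep t t' \<Longrightarrow> jstep (Lam t) (Lam t')"
| j_appL: "jstep t t' \<Longrightarrow> jstep (App t u) (App t' u)"
| j_appR: "jstep u u' \<Longrightarrow> jstep (App t u) (App t u')"
| j_subL: "jstep t t' \<Longrightarrow> jstep (Sub t u) (Sub t' u)"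
| j_subR: "jstep u u' \<Longrightarrow> jstep (Sub t u) (Sub t u')"

text \<open>The substitution equivalence ==_obox: smallest equivalence relation closed under
  contexts containing the five axioms (side conditions "x notin fv(-)" are expressed by
  requiring the term to be a lifted term).\<close>
inductive obox_eq :: "trm \<Rightarrow> trm \<Rightarrow> bool" where
  ax_comm: "obox_eq (Sub (Sub t (lift 0 s)) v) (Sub (Sub (swap 0 t) (lift 0 v)) s)"
| ax_lam:  "obox_eq (Lam (Sub t (lift 0 s))) (Sub (Lam (swap 0 t)) s)"
| ax_appL: "obox_eq (App (Sub t s) v) (Sub (App t (lift 0 v)) s)"
| ax_appR: "occ 0 v \<ge> 1 \<Longrightarrow> obox_eq (Sub (App (lift 0 t) v) u) (App t (Sub v u))"
| ax_box:  "occ 0 v \<ge> 1 \<Longrightarrow> obox_eq (Sub (Sub (lift 1 t) v) u) (Sub t (Sub v u))"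
| eq_refl:  "obox_eq t t"
| eq_sym:   "obox_eq t u \<Longrightarrow> obox_eq u t"
| eq_trans: "obox_eq t u \<Longrightarrow> obox_eq u v \<Longrightarrow> obox_eq t v"
| eq_lam:  "obox_eq t t' \<Longrightarrow> obox_eq (Lam t) (Lam t')"
| eq_app:  "obox_eq t t' \<Longrightarrow> obox_eq u u' \<Longrightarrow> obox_eq (App t u) (App t' u')"
| eq_sub:  "obox_eq t t' \<Longrightarrow> obox_eq u u' \<Longrightarrow> obox_eq (Sub t u) (Sub t' u')"

definition jobox :: "trm \<Rightarrow> trm \<Rightarrow> bool" where
  "jobox t u \<longleftrightarrow> (\<exists>t' u'. obox_eq t t' \<and> jstep t' u' \<and> obox_eq u' u)"

end

theory Submission
  imports Defs "HOL-Library.Multiset_Order"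
begin

text \<open>
  Termination of reduction modulo, j/obox, is proved with a multiset measure that is
  invariant under the substitution equivalence and strictly decreases under j-steps.

  The weighted occurrence count wocc k t counts the free occurrences of index k in t,
  where an occurrence inside the argument u of an explicit substitution t'[x/u] counts
  max(|t'|_x, 1) times: once for each copy of u that the substitution will eventually
  produce.  The measure of a term is the multiset that records, for every explicit
  substitution t'[x/u] in it, the weighted count of x in t', scaled by the copy factors of
  the substitutions whose arguments contain it.

  Well-foundedness of the multiset order then excludes infinite reduction sequences.
\<close>

fun wocc :: "nat \<Rightarrow> trm \<Rightarrow> nat" where
  "wocc k (Var i) = (if i = k then 1 else 0)"
| "wocc k (Lam t) = wocc (Suc k) t"
| "wocc k (App t u) = wocc k t + wocc k u"
| "wocc k (Sub t u) = wocc (Suc k) t + max (wocc 0 t) 1 * wocc k u"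

fun sub_measure :: "trm \<Rightarrow> nat multiset" where
  "sub_measure (Var i) = {#}"
| "sub_measure (Lam t) = sub_measure t"
| "sub_measure (App t u) = sub_measure t + sub_measure u"
| "sub_measure (Sub t u) =
     add_mset (wocc 0 t) (sub_measure t + image_mset ((*) (max (wocc 0 t) 1)) (sub_measure u))"

lemma wocc_lift [simp]:
  "wocc j (lift k t) = (if j < k then wocc j t else if j = k then 0 else wocc (j - 1) t)"
  by (induction t arbitrary: j k) auto

lemma sub_measure_lift [simp]: "sub_measure (lift k t) = sub_measure t"
  by (induction t arbitrary: k) auto

lemma wocc_swap:
  "wocc j (swap k t) = wocc (if j = k then Suc k else if j = Suc k then k else j) t"
  by (induction t arbitrary: j k) auto

lemma sub_measure_swap [simp]: "sub_measure (swap k t) = sub_measure t"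
  by (induction t arbitrary: k) (auto simp: wocc_swap)

lemma wocc_eq_0_iff: "wocc k t = 0 \<longleftrightarrow> occ k t = 0"
  by (induction t arbitrary: k) auto

lemma image_mset_scale_scale [simp]:
  "image_mset ((*) (a::nat)) (image_mset ((*) b) M) = image_mset ((*) (a * b)) M"
  by (induction M) auto

lemma image_mset_scale_one [simp]: "image_mset ((*) (Suc 0)) M = M"
  by (induction M) auto

lemma wocc_subst:
  "wocc j (subst t k u) = wocc (if j < k then j else Suc j) t + wocc k t * wocc j u"
proof (induction t arbitrary: j k u)
  case (Sub t1 t2)
  have "wocc 0 (subst t1 (Suc k) (lift 0 u)) = wocc 0 t1"
    using Sub.IH(1)[of 0 "Suc k" "lift 0 u"] by simp
  then show ?case using Sub.IH(1)[of "Suc j" "Suc k" "lift 0 u"] Sub.IH(2)[of j k u]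
    by (simp add: algebra_simps)
qed (auto simp: algebra_simps)

lemma sub_measure_subst:
  assumes "occ k t \<le> 1"
  shows "sub_measure (subst t k u) =
           sub_measure t + (if occ k t = 0 then {#} else image_mset ((*) (wocc k t)) (sub_measure u))"
  using assms
proof (induction t arbitrary: k u)
  case (App t1 t2)
  then have "occ k t1 \<le> 1" "occ k t2 \<le> 1" by auto
  with App.IH[of k u] show ?case using App.prems wocc_eq_0_iff[of k t1] wocc_eq_0_iff[of k t2]
    by (cases "occ k t1 = 0"; cases "occ k t2 = 0") (auto simp: ac_simps)
next
  case (Sub t1 t2)
  have "wocc 0 (subst t1 (Suc k) (lift 0 u)) = wocc 0 t1"
    using wocc_subst[of 0 t1 "Suc k" "lift 0 u"] by simp
  moreover from Sub.prems have "occ (Suc k) t1 \<le> 1" "occ k t2 \<le> 1" by auto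
  ultimately show ?case
    using Sub.IH(1)[of "Suc k" "lift 0 u"] Sub.IH(2)[of k u] Sub.prems
      wocc_eq_0_iff[of "Suc k" t1] wocc_eq_0_iff[of k t2]
    by (cases "occ (Suc k) t1 = 0"; cases "occ k t2 = 0") (auto simp: algebra_simps)
qed auto

lemma split_invariants:
  assumes "split d t s"
  shows "wocc d t = wocc d s + wocc (Suc d) s \<and> (\<forall>j<d. wocc j s = wocc j t) \<and>
         (\<forall>j>d. wocc (Suc j) s = wocc j t) \<and> sub_measure s = sub_measure t"
  using assms
proof (induction rule: split.induct)
  case (split_lam d t s)
  then show ?case by (auto simp: All_less_Suc2 less_Suc_eq_0_disj)
next
  case (split_sub d t s u v)
  then have "wocc 0 s = wocc 0 t" "\<forall>j<d. wocc (Suc j) s = wocc (Suc j) t"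
    "\<forall>j>d. wocc (Suc (Suc j)) s = wocc (Suc j) t" by auto
  with split_sub show ?case by (auto simp: algebra_simps)
qed auto

text \<open>The measure and all weighted counts are invariant under obox-equivalence.
  The side condition of the two last axioms is what makes the copy factor of u agree.\<close>

lemma obox_eq_invariants:
  assumes "obox_eq t u"
  shows "sub_measure t = sub_measure u \<and> (\<forall>k. wocc k t = wocc k u)"
  using assms
proof (induction rule: obox_eq.induct)
  case (ax_appR v t u)
  then have "wocc 0 v \<ge> 1" using wocc_eq_0_iff[of 0 v] by auto
  then show ?case by (auto simp: algebra_simps)
next
  case (ax_box v t u)
  then have "wocc 0 v \<ge> 1" using wocc_eq_0_iff[of 0 v] by auto
  then show ?case by (auto simp: algebra_simps)
qed (auto simp: wocc_swap algebra_simps)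

lemma image_mset_pointwise_le:
  fixes f g :: "'a \<Rightarrow> 'b::linorder"
  assumes "\<forall>x\<in>#M. f x \<le> g x"
  shows "image_mset f M \<le> image_mset g M"
  using assms by (induction M) (auto intro: add_mset_le_le_le)

lemma less_multiset_if_dominated:
  assumes "N \<noteq> {#}" and "\<forall>x\<in>#M. \<exists>y\<in>#N. x < y"
  shows "M < N"
  unfolding less_multiset\<^sub>D\<^sub>M
proof (intro exI conjI)
  show "M = N - N + M" by simp
qed (use assms in auto)

text \<open>The key inequality behind contraction: the measure decreases when the entry a+b
  together with U scaled by a+b is replaced by the entries a, b and two copies of U, scaled
  by a and by b.\<close>

lemma duplication_decreases:
  fixes a b :: nat
  assumes "a \<ge> 1" and "b \<ge> 1"
  shows "add_mset b (add_mset a (K + image_mset ((*) a) U) + image_mset ((*) b) U)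
           < add_mset (a + b) (K + image_mset ((*) (a + b)) U)"
proof -
  have "\<exists>y\<in># add_mset (a + b) (image_mset ((*) (a + b)) U). x < y"
    if "x \<in># add_mset b (add_mset a (image_mset ((*) a) U + image_mset ((*) b) U))" for x
  proof -
    from that consider (unscaled) "x = a \<or> x = b"
      | (scaled) c z where "c = a \<or> c = b" "z \<in># U" "x = c * z"
      by auto
    then show ?thesis
    proof cases
      case unscaled
      then show ?thesis using assms by auto
    next
      case scaled
      show ?thesis
      proof (cases "z = 0")
        case True
        with scaled assms show ?thesis by auto
      next
        case False
        with scaled assms have "x < (a + b) * z" by auto
        with scaled(2) show ?thesis by (intro bexI[of _ "(a + b) * z"]) auto
      qed
    qed
  qed
  then have "add_mset b (add_mset a (image_mset ((*) a) U + image_mset ((*) b) U))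
               < add_mset (a + b) (image_mset ((*) (a + b)) U)"
    by (intro less_multiset_if_dominated) auto
  then show ?thesis
    using union_le_mono2[of _ _ K] by (simp add: ac_simps add_mset_commute)
qed

text \<open>Root steps w and d: the substitution entry disappears, and u is copied at most once.\<close>

lemma linear_substitution_decreases:
  assumes "occ 0 t \<le> 1"
  shows "sub_measure (subst t 0 u) < sub_measure (Sub t u)
         \<and> (\<forall>k. wocc k (subst t 0 u) \<le> wocc k (Sub t u))"
proof (cases "occ 0 t = 0")
  case True
  then have "wocc 0 t = 0" by (simp add: wocc_eq_0_iff)
  moreover have "sub_measure t < add_mset 0 (sub_measure t + U)" for U
    by (rule subset_imp_less_mset) (simp add: subset_mset.less_le_not_le)
  ultimately show ?thesis using assms True by (simp add: sub_measure_subst wocc_subst)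
next
  case False
  then have "wocc 0 t \<ge> 1" using wocc_eq_0_iff[of 0 t] by simp
  then show ?thesis using assms False
    by (simp add: sub_measure_subst wocc_subst le_multiset_right_total)
qed

lemma contraction_decreases:
  assumes "split 0 t s" and "occ 0 s \<ge> 1" and "occ 1 s \<ge> 1"
  shows "sub_measure (Sub (Sub s (lift 0 u)) u) < sub_measure (Sub t u)
         \<and> (\<forall>k. wocc k (Sub (Sub s (lift 0 u)) u) = wocc k (Sub t u))"
proof -
  have split: "wocc 0 t = wocc 0 s + wocc 1 s" "\<forall>j>0. wocc (Suc j) s = wocc j t"
    "sub_measure s = sub_measure t"
    using split_invariants[OF assms(1)] by auto
  have a: "wocc 0 s \<ge> 1" and b: "wocc 1 s \<ge> 1"
    using assms(2,3) wocc_eq_0_iff[of 0 s] wocc_eq_0_iff[of 1 s] by auto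
  have "sub_measure (Sub (Sub s (lift 0 u)) u) =
          add_mset (wocc 1 s) (add_mset (wocc 0 s) (sub_measure t
            + image_mset ((*) (wocc 0 s)) (sub_measure u)) + image_mset ((*) (wocc 1 s)) (sub_measure u))"
    using a b split(3) by (simp add: max_absorb1)
  also have "\<dots> < add_mset (wocc 0 s + wocc 1 s)
                      (sub_measure t + image_mset ((*) (wocc 0 s + wocc 1 s)) (sub_measure u))"
    using a b by (rule duplication_decreases)
  also have "\<dots> = sub_measure (Sub t u)"
    using split(1) a by (simp add: max_absorb1)
  finally show ?thesis
    using a b split(1,2) by (simp add: algebra_simps max_absorb1)
qed

text \<open>A j-step decreases the measure and does not increase any weighted count;
  the latter makes the copy factors monotone, which handles steps in the body of a substitution.\<close>

lemma jstep_decreases: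
  assumes "jstep t u"
  shows "sub_measure u < sub_measure t \<and> (\<forall>k. wocc k u \<le> wocc k t)"
  using assms
proof (induction rule: jstep.induct)
  case (j_w t u)
  then show ?case using linear_substitution_decreases[of t u] by simp
next
  case (j_d t u)
  then show ?case using linear_substitution_decreases[of t u] by simp
next
  case (j_c t s u)
  then show ?case using contraction_decreases[of t s u] by simp
next
  case (j_subL t t' u)
  then have "wocc 0 t' \<le> wocc 0 t" by simp
  then have "max (wocc 0 t') 1 \<le> max (wocc 0 t) 1" by simp
  then have "image_mset ((*) (max (wocc 0 t') 1)) (sub_measure u)
               \<le> image_mset ((*) (max (wocc 0 t) 1)) (sub_measure u)"
    by (intro image_mset_pointwise_le) simp
  with j_subL \<open>max (wocc 0 t') 1 \<le> max (wocc 0 t) 1\<close> show ?case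
    by (auto intro!: add_mset_lt_le_lt add_less_le_mono add_mono mult_le_mono)
next
  case (j_subR u u' t)
  then have "image_mset ((*) (max (wocc 0 t) 1)) (sub_measure u')
               < image_mset ((*) (max (wocc 0 t) 1)) (sub_measure u)"
    by (intro image_mset_strict_mono) auto
  with j_subR show ?case by (auto intro: add_mset_lt_right_lt union_le_mono2)
qed (auto intro: add_mono union_le_mono1 union_le_mono2)

lemma jobox_decreases:
  assumes "jobox t u"
  shows "sub_measure u < sub_measure t"
proof -
  obtain t' u' where eq: "obox_eq t t'" and step: "jstep t' u'" and eq': "obox_eq u' u"
    using assms unfolding jobox_def by blast
  have "sub_measure u = sub_measure u'" using obox_eq_invariants[OF eq'] by simp
  also have "\<dots> < sub_measure t'" using jstep_decreases[OF step] by simp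
  also have "\<dots> = sub_measure t" using obox_eq_invariants[OF eq] by simp
  finally show ?thesis .
qed

lemma no_infinite_chain_if_measure_decreases:
  fixes \<mu> :: "'a \<Rightarrow> 'b::wellorder"
  assumes "\<And>x y. R x y \<Longrightarrow> \<mu> y < \<mu> x"
  shows "\<not> (\<exists>f. \<forall>i. R (f i) (f (Suc i)))"
proof
  assume "\<exists>f. \<forall>i. R (f i) (f (Suc i))"
  then obtain f where chain: "\<And>i. R (f i) (f (Suc i))" by blast
  obtain k where "((\<mu> \<circ> f) (Suc k), (\<mu> \<circ> f) k) \<notin> {(x, y). x < y}"
    by (rule wf_no_infinite_down_chainE[OF wellorder_class.wf])
  with assms[OF chain[of k]] show False by simp
qed

theorem corollary28:
  shows "\<not> (\<exists>f :: nat \<Rightarrow> trm. \<forall>i. jobox (f i) (f (Suc i)))"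
  by (rule no_infinite_chain_if_measure_decreases[of jobox sub_measure]) (rule jobox_decreases)

end
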